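(* Let $(\mathrm X,\mathsf d,\mathfrak m)$ be a geodesic metric measure space and let $\{x_i\}_{i\in I}$ be a countable collection of distinct points of $\mathrm X$. For $i,j\in I$ and $\delta\in\mathbb R$ let $U^\delta_{i,j}=\{x\in\mathrm X:\mathsf d(x,x_i)-\mathsf d(x,x_j)<\delta\}$. Then for any $i,j\in I$ and $\delta>-\mathsf d(x_i,x_j)$, the set $U^\delta_{i,j}$ is star-shaped at $x_i$. Moreover, there exists a countable set $S_{i,j}\subset(-\mathsf d(x_i,x_j),\infty)$ such that $$\mathfrak m(\{x\in\mathrm X:\mathsf d(x,x_i)-\mathsf d(x,x_j)=\delta\})=0\qquad\forall\,\delta\in(-\mathsf d(x_i,x_j),\infty)\setminus S_{i,j}.$$
   Context: A metric measure space is a complete separable metric space with a non-negative, non-zero Borel measure finite on bounded sets; geodesic means any two points are joined by a geodesic $\gamma:[0,1]\to\mathrm X$, $\mathsf d(\gamma_s,\gamma_t)=|s-t|\mathsf d(\gamma_0,\gamma_1)$. A Borel set $T$ is star-shaped at $x\in T$ if for every $y\in T$ there is a geodesic from $x$ to $y$ contained in $T$. *)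

theory Defs
  imports "HOL-Analysis.Analysis"
begin

text \<open>A metric measure space: the ambient type is a complete separable metric
  space (class polish_space = complete metric + second countable), and M is a
  non-zero Borel measure, finite on bounded (Borel) sets.\<close>
definition mms :: "'a::polish_space measure \<Rightarrow> bool" where
  "mms M \<longleftrightarrow> sets M = sets borel \<and> emeasure M (space M) \<noteq> 0 \<and>
     (\<forall>B. B \<in> sets borel \<and> bounded B \<longrightarrow> emeasure M B < \<infinity>)"

definition geodesic_between :: "(real \<Rightarrow> 'a::metric_space) \<Rightarrow> 'a \<Rightarrow> 'a \<Rightarrow> bool" where
  "geodesic_between \<gamma> x y \<longleftrightarrow> \<gamma> 0 = x \<and> \<gamma> 1 = y \<and>
     (\<forall>s\<in>{0..1}. \<forall>t\<in>{0..1}. dist (\<gamma> s) (\<gamma> t) = \<bar>s - t\<bar> * dist x y)"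

definition geodesic_space :: "'a::metric_space itself \<Rightarrow> bool" where
  "geodesic_space _ \<longleftrightarrow> (\<forall>x y::'a. \<exists>\<gamma>. geodesic_between \<gamma> x y)"

definition star_shaped_at :: "'a::metric_space set \<Rightarrow> 'a \<Rightarrow> bool" where
  "star_shaped_at T x \<longleftrightarrow> T \<in> sets borel \<and> x \<in> T \<and>
     (\<forall>y\<in>T. \<exists>\<gamma>. geodesic_between \<gamma> x y \<and> \<gamma> ` {0..1} \<subseteq> T)"

end

theory Submission
  imports Defs
begin

text \<open>Write \<open>f y = d(y, x\<^sub>i) - d(y, x\<^sub>j)\<close>. Along a geodesic \<open>\<gamma>\<close> from \<open>x\<^sub>i\<close> to \<open>y\<close>,
  the first term grows exactly linearly while, by the triangle inequality, the second one
  cannot drop faster; hence \<open>f (\<gamma> t) \<le> f y\<close>, and every sublevel set \<open>{f < \<delta>}\<close> containing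
  \<open>x\<^sub>i\<close> is star-shaped at \<open>x\<^sub>i\<close>. The level sets \<open>{f = \<delta>}\<close> are pairwise disjoint and
  \<open>\<mathfrak>m\<close> is \<open>\<sigma>\<close>-finite (balls have finite measure), so only countably many of them
  can have positive measure.\<close>

lemma geodesic_between_dist_start:
  assumes "geodesic_between \<gamma> x y" and "t \<in> {0..1}"
  shows "dist (\<gamma> t) x = t * dist x y"
  using assms unfolding geodesic_between_def
  by (metis atLeastAtMost_iff diff_zero abs_of_nonneg order_refl zero_le_one)

lemma geodesic_between_dist_end:
  assumes "geodesic_between \<gamma> x y" and "t \<in> {0..1}"
  shows "dist (\<gamma> t) y = (1 - t) * dist x y"
  using assms unfolding geodesic_between_def
  by (metis atLeastAtMost_iff abs_minus_commute abs_of_nonneg diff_ge_0_iff_ge order_refl zero_le_one)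

lemma dist_diff_along_geodesic_le:
  assumes \<gamma>: "geodesic_between \<gamma> a y" and t: "t \<in> {0..1}"
  shows "dist (\<gamma> t) a - dist (\<gamma> t) b \<le> dist y a - dist y b"
proof -
  have "dist y b \<le> dist (\<gamma> t) y + dist (\<gamma> t) b"
    by (metis dist_commute dist_triangle)
  then show ?thesis
    using geodesic_between_dist_start[OF \<gamma> t] geodesic_between_dist_end[OF \<gamma> t]
    by (simp add: dist_commute algebra_simps)
qed

lemma star_shaped_at_dist_diff_sublevel:
  fixes a b :: "'a::metric_space"
  assumes geodesic: "geodesic_space TYPE('a)" and \<delta>: "\<delta> > - dist a b"
  shows "star_shaped_at {y. dist y a - dist y b < \<delta>} a"
  unfolding star_shaped_at_def
proof (intro conjI ballI)
  let ?U = "{y. dist y a - dist y b < \<delta>}"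
  have "open ?U"
    by (intro open_Collect_less continuous_intros)
  then show "?U \<in> sets borel"
    by simp
  show "a \<in> ?U"
    using \<delta> by simp
  fix y assume y: "y \<in> ?U"
  obtain \<gamma> where \<gamma>: "geodesic_between \<gamma> a y"
    using geodesic unfolding geodesic_space_def by blast
  have "\<gamma> ` {0..1} \<subseteq> ?U"
    using y by (auto intro: le_less_trans[OF dist_diff_along_geodesic_le[OF \<gamma>]])
  with \<gamma> show "\<exists>\<gamma>. geodesic_between \<gamma> a y \<and> \<gamma> ` {0..1} \<subseteq> ?U"
    by blast
qed

lemma (in sigma_finite_measure) countable_nonnull_level_sets:
  fixes f :: "'a \<Rightarrow> 'b::t1_space"
  assumes f: "f \<in> borel_measurable M"
  shows "countable {t. emeasure M (f -` {t} \<inter> space M) \<noteq> 0}"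
proof -
  obtain A :: "nat \<Rightarrow> 'a set" where
    A: "range A \<subseteq> sets M" "(\<Union>i. A i) = space M" "\<And>i. emeasure M (A i) \<noteq> \<infinity>"
    using sigma_finite by blast
  define N where "N i = distr (density M (indicator (A i))) borel f" for i
  have level: "f -` {t} \<inter> space M \<in> sets M" for t
    using measurable_sets[OF f] by simp
  have emeasure_N: "emeasure (N i) {t} = emeasure M (A i \<inter> (f -` {t} \<inter> space M))" for i t
    unfolding N_def using f A(1) level by (simp add: emeasure_distr emeasure_restricted)
  have finite_N: "finite_measure (N i)" for i
  proof
    have "emeasure (N i) (space (N i)) = emeasure M (A i \<inter> space M)"
      unfolding N_def using f A(1) by (simp add: emeasure_distr emeasure_restricted)
    then show "emeasure (N i) (space (N i)) \<noteq> \<infinity>"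
      using A(1,3) sets.Int_space_eq2 by auto
  qed
  have "{t. emeasure M (f -` {t} \<inter> space M) \<noteq> 0} \<subseteq> (\<Union>i. {t. measure (N i) {t} \<noteq> 0})"
  proof (rule subsetI, rule ccontr)
    fix t assume nonnull: "t \<in> {t. emeasure M (f -` {t} \<inter> space M) \<noteq> 0}"
      and "t \<notin> (\<Union>i. {t. measure (N i) {t} \<noteq> 0})"
    then have "emeasure (N i) {t} = 0" for i
      using finite_measure.emeasure_eq_measure[OF finite_N] by auto
    then have "emeasure M (A i \<inter> (f -` {t} \<inter> space M)) = 0" for i
      using emeasure_N by simp
    then have "emeasure M (\<Union>i. A i \<inter> (f -` {t} \<inter> space M)) = 0"
      using A(1) level by (intro emeasure_UN_eq_0) auto
    moreover have "(\<Union>i. A i \<inter> (f -` {t} \<inter> space M)) = f -` {t} \<inter> space M"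
      using A(2) by blast
    ultimately show False
      using nonnull by simp
  qed
  then show ?thesis
    by (rule countable_subset)
      (intro countable_UN[OF _ finite_measure.countable_support[OF finite_N]], simp)
qed

lemma mms_space: "mms M \<Longrightarrow> space M = UNIV"
  unfolding mms_def by (metis sets_eq_imp_space_eq space_borel)

lemma mms_sigma_finite:
  assumes "mms M"
  shows "sigma_finite_measure M"
proof
  fix a :: 'a
  have "emeasure M (ball a (real n)) \<noteq> \<infinity>" for n
    using assms bounded_ball[of a "real n"] unfolding mms_def by (simp add: less_top)
  moreover have "(\<Union>n. ball a (real n)) = space M"
    using mms_space[OF assms] reals_Archimedean2 by (auto simp: dist_commute)
  ultimately show "\<exists>A. countable A \<and> A \<subseteq> sets M \<and> \<Union>A = space M \<and> (\<forall>a\<in>A. emeasure M a \<noteq> \<infinity>)"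
    using assms unfolding mms_def
    by (intro exI[of _ "range (\<lambda>n. ball a (real n))"]) auto
qed

lemma mms_countable_nonnull_dist_diff_levels:
  fixes a b :: "'a::polish_space"
  assumes "mms M"
  shows "countable {\<delta>. emeasure M {y. dist y a - dist y b = \<delta>} \<noteq> 0}"
proof -
  have "(\<lambda>y. dist y a - dist y b) \<in> borel_measurable borel"
    by (intro borel_measurable_continuous_onI continuous_intros)
  then have "(\<lambda>y. dist y a - dist y b) \<in> borel_measurable M"
    using measurable_cong_sets[OF _ refl, of M borel] assms unfolding mms_def by blast
  from sigma_finite_measure.countable_nonnull_level_sets[OF mms_sigma_finite[OF assms] this]
  show ?thesis
    by (simp add: vimage_def mms_space[OF assms])
qed

theorem lemma6p2:
  fixes M :: "'a::polish_space measure" and x :: "'i \<Rightarrow> 'a" and I :: "'i set"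
  assumes "mms M" and "geodesic_space TYPE('a)"
    and "countable I" and "inj_on x I"
  shows "\<forall>i\<in>I. \<forall>j\<in>I.
     (\<forall>\<delta>::real. \<delta> > - dist (x i) (x j) \<longrightarrow>
        star_shaped_at {y. dist y (x i) - dist y (x j) < \<delta>} (x i)) \<and>
     (\<exists>S. countable S \<and> S \<subseteq> {- dist (x i) (x j)<..} \<and>
        (\<forall>\<delta>\<in>{- dist (x i) (x j)<..} - S.
           emeasure M {y. dist y (x i) - dist y (x j) = \<delta>} = 0))"
proof (intro ballI conjI allI impI)
  fix i j \<delta>
  assume "\<delta> > - dist (x i) (x j)"
  then show "star_shaped_at {y. dist y (x i) - dist y (x j) < \<delta>} (x i)"
    using star_shaped_at_dist_diff_sublevel[OF assms(2)] by blast
next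
  fix i j
  let ?S = "{\<delta>. emeasure M {y. dist y (x i) - dist y (x j) = \<delta>} \<noteq> 0} \<inter> {- dist (x i) (x j)<..}"
  have "countable ?S"
    using mms_countable_nonnull_dist_diff_levels[OF assms(1)] by blast
  then show "\<exists>S. countable S \<and> S \<subseteq> {- dist (x i) (x j)<..} \<and>
        (\<forall>\<delta>\<in>{- dist (x i) (x j)<..} - S.
           emeasure M {y. dist y (x i) - dist y (x j) = \<delta>} = 0)"
    by (intro exI[of _ ?S]) auto
qed

end
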